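(* Let $f:\mathbb{R}^2\to\mathbb{R}^2$ be a Topologically Anosov homeomorphism and let $z\in\mathbb{R}^2$ satisfy $\omega(z)=\emptyset$. Then $\alpha(z)$ is either unbounded or consists of a single periodic orbit.
   Context: A homeomorphism $f:\mathbb{R}^2\to\mathbb{R}^2$ is Topologically Anosov (TA) if: (i) there is a continuous strictly positive $\epsilon:\mathbb{R}^2\to\mathbb{R}$ such that for all $x\neq y$ there is $k\in\mathbb{Z}$ with $\|f^k(x)-f^k(y)\|>\epsilon(f^k(x))$; and (ii) for every continuous strictly positive $\epsilon$ there is a continuous strictly positive $\delta$ such that every $\delta$-pseudo-orbit is $\epsilon$-shadowed by an orbit. A $\delta$-pseudo-orbit is a sequence $(x_n)_{n\in\mathbb{Z}}$ with $\|f(x_n)-x_{n+1}\|<\delta(f(x_n))$; it is $\epsilon$-shadowed by the orbit of $x$ if $\|x_n-f^n(x)\|<\epsilon(x_n)$ for all $n$. $\alpha(z)$ and $\omega(z)$ denote the $\alpha$- and $\omega$-limit sets of $z$ under $f$. *)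

theory Defs
  imports "HOL-Analysis.Analysis"
begin

definition is_homeo :: "(real^2 \<Rightarrow> real^2) \<Rightarrow> bool" where
  "is_homeo f \<longleftrightarrow> (\<exists>g. homeomorphism UNIV UNIV f g)"

definition iter :: "(real^2 \<Rightarrow> real^2) \<Rightarrow> int \<Rightarrow> real^2 \<Rightarrow> real^2" where
  "iter f k = (if 0 \<le> k then f ^^ nat k else (inv f) ^^ nat (- k))"

definition pos_cont :: "(real^2 \<Rightarrow> real) \<Rightarrow> bool" where
  "pos_cont e \<longleftrightarrow> continuous_on UNIV e \<and> (\<forall>x. 0 < e x)"

definition pseudo_orbit :: "(real^2 \<Rightarrow> real^2) \<Rightarrow> (real^2 \<Rightarrow> real) \<Rightarrow> (int \<Rightarrow> real^2) \<Rightarrow> bool" where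
  "pseudo_orbit f \<delta> xs \<longleftrightarrow> (\<forall>n. norm (f (xs n) - xs (n + 1)) < \<delta> (f (xs n)))"

definition shadowed :: "(real^2 \<Rightarrow> real^2) \<Rightarrow> (real^2 \<Rightarrow> real) \<Rightarrow> (int \<Rightarrow> real^2) \<Rightarrow> real^2 \<Rightarrow> bool" where
  "shadowed f \<epsilon> xs x \<longleftrightarrow> (\<forall>n. norm (xs n - iter f n x) < \<epsilon> (xs n))"

definition topologically_anosov :: "(real^2 \<Rightarrow> real^2) \<Rightarrow> bool" where
  "topologically_anosov f \<longleftrightarrow>
     is_homeo f \<and>
     (\<exists>\<epsilon>. pos_cont \<epsilon> \<and>
        (\<forall>x y. x \<noteq> y \<longrightarrow> (\<exists>k. norm (iter f k x - iter f k y) > \<epsilon> (iter f k x)))) \<and>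
     (\<forall>\<epsilon>. pos_cont \<epsilon> \<longrightarrow> (\<exists>\<delta>. pos_cont \<delta> \<and>
        (\<forall>xs. pseudo_orbit f \<delta> xs \<longrightarrow> (\<exists>x. shadowed f \<epsilon> xs x))))"

definition omega_limit :: "(real^2 \<Rightarrow> real^2) \<Rightarrow> real^2 \<Rightarrow> (real^2) set" where
  "omega_limit f z = {y. \<exists>r::nat \<Rightarrow> int. filterlim r at_top sequentially \<and>
                          ((\<lambda>k. iter f (r k) z) \<longlongrightarrow> y) sequentially}"

definition alpha_limit :: "(real^2 \<Rightarrow> real^2) \<Rightarrow> real^2 \<Rightarrow> (real^2) set" where
  "alpha_limit f z = {y. \<exists>r::nat \<Rightarrow> int. filterlim r at_bot sequentially \<and>
                          ((\<lambda>k. iter f (r k) z) \<longlongrightarrow> y) sequentially}"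

definition orbit :: "(real^2 \<Rightarrow> real^2) \<Rightarrow> real^2 \<Rightarrow> (real^2) set" where
  "orbit f p = {iter f k p | k. True}"

definition periodic_point :: "(real^2 \<Rightarrow> real^2) \<Rightarrow> real^2 \<Rightarrow> bool" where
  "periodic_point f p \<longleftrightarrow> (\<exists>n::nat. 0 < n \<and> (f ^^ n) p = p)"

end

theory Submission
  imports Defs
begin

text \<open>
  Since \<open>\<omega>(z) = \<emptyset>\<close>, the forward orbit of \<open>z\<close> visits every bounded set only finitely
  often, so a positive continuous \<open>\<epsilon>\<close> can be chosen so small along it that the only orbit
  \<open>\<epsilon>\<close>-shadowing the forward orbit of \<open>z\<close> is that of \<open>z\<close> itself. If \<open>\<alpha>(z)\<close> were empty too,
  the same would hold backwards, and shadowing a pseudo-orbit that jumps from the orbit of a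
  nearby point \<open>w \<noteq> z\<close> onto the orbit of \<open>z\<close> would force \<open>w = z\<close>.
  So \<open>\<alpha>(z)\<close> contains a point \<open>x\<^sub>0\<close>, and two backward iterates of \<open>z\<close> near \<open>x\<^sub>0\<close> close up
  to a periodic pseudo-orbit. Shadowing "this loop in the past, the orbit of \<open>z\<close> in the future"
  yields \<open>z\<close> again, so the backward orbit of \<open>z\<close> stays \<open>\<epsilon>\<close>-close to the loop; the loop is
  shadowed by a periodic orbit, and expansivity identifies \<open>\<alpha>(z)\<close> with it. Thus the second
  alternative of the theorem always holds.
\<close>

section \<open>Integer iterates\<close>

lemma inv_eq_homeomorphism:
  assumes "homeomorphism UNIV UNIV f g"
  shows "inv f = g"
  using assms by (intro ext inv_equality) (auto simp: homeomorphism_def)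

lemma iter_0 [simp]: "iter f 0 x = x"
  by (simp add: iter_def)

lemma iter_succ:
  assumes h: "homeomorphism UNIV UNIV f g"
  shows "iter f (k + 1) x = f (iter f k x)"
proof -
  have fg: "\<And>y. f (g y) = y" and ig: "inv f = g"
    using h inv_eq_homeomorphism[OF h] by (auto simp: homeomorphism_def)
  consider "0 \<le> k" | "k = -1" | "k < -1" by linarith
  then show ?thesis
  proof cases
    case 1
    then have "nat (k + 1) = Suc (nat k)" by simp
    with 1 show ?thesis by (simp add: iter_def)
  next
    case 2
    then show ?thesis by (simp add: iter_def ig fg)
  next
    case 3
    then have "nat (- k) = Suc (nat (- (k + 1)))" by simp
    with 3 have "iter f k x = g (iter f (k + 1) x)" by (simp add: iter_def ig)
    then show ?thesis by (simp add: fg)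
  qed
qed

lemma iter_pred:
  assumes h: "homeomorphism UNIV UNIV f g"
  shows "iter f (k - 1) x = g (iter f k x)"
  using iter_succ[OF h, of "k - 1" x] h by (simp add: homeomorphism_def)

lemma iter_add:
  assumes h: "homeomorphism UNIV UNIV f g"
  shows "iter f (m + n) x = iter f m (iter f n x)"
proof (induction m rule: int_induct[where k = 0])
  case base
  then show ?case by simp
next
  case (step1 i)
  then show ?case using iter_succ[OF h, of "i + n"] iter_succ[OF h, of i]
    by (simp add: ac_simps)
next
  case (step2 i)
  then show ?case using iter_pred[OF h, of "i + n"] iter_pred[OF h, of i]
    by (simp add: algebra_simps)
qed

lemma iter_inj:
  assumes "homeomorphism UNIV UNIV f g"
  shows "iter f n x = iter f n y \<longleftrightarrow> x = y"
  by (metis iter_add[OF assms] iter_0 add.commute add.right_inverse)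

lemma continuous_on_funpow:
  fixes f :: "'a::topological_space \<Rightarrow> 'a"
  assumes "continuous_on UNIV f"
  shows "continuous_on UNIV (f ^^ n)"
proof (induction n)
  case (Suc n)
  then show ?case
    using continuous_on_compose[OF Suc continuous_on_subset[OF assms]] by simp
qed (simp add: id_def)

lemma continuous_on_iter:
  assumes h: "homeomorphism UNIV UNIV f g"
  shows "continuous_on UNIV (iter f n)"
  using h continuous_on_funpow[of f] continuous_on_funpow[of g]
  by (simp add: iter_def inv_eq_homeomorphism[OF h] homeomorphism_def)

lemma iter_tendsto:
  assumes "homeomorphism UNIV UNIV f g" and "s \<longlonglongrightarrow> x"
  shows "(\<lambda>k. iter f t (s k)) \<longlonglongrightarrow> iter f t x"
  using continuous_on_iter[OF assms(1)] assms(2)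
  by (simp add: continuous_on_eq_continuous_at isCont_tendsto_compose)

lemma periodic_pointI:
  assumes "0 < P" and "iter f P p = p"
  shows "periodic_point f p"
  unfolding periodic_point_def using assms by (intro exI[of _ "nat P"]) (simp add: iter_def)

lemma orbit_iter:
  assumes "homeomorphism UNIV UNIV f g"
  shows "orbit f (iter f s p) = orbit f p"
  unfolding orbit_def using iter_add[OF assms] by (metis diff_add_cancel)

section \<open>Positive Lipschitz minorants\<close>

definition dist_minorant :: "('i \<Rightarrow> 'a::metric_space) \<Rightarrow> ('i \<Rightarrow> real) \<Rightarrow> 'i set \<Rightarrow> 'a \<Rightarrow> real" where
  "dist_minorant a c I q = Inf (insert 1 ((\<lambda>i. c i + dist q (a i)) ` I))"

lemma dist_minorant_le:
  assumes "\<forall>i\<in>I. 0 \<le> c i"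
  shows "dist_minorant a c I q \<le> 1" and "i \<in> I \<Longrightarrow> dist_minorant a c I q \<le> c i + dist q (a i)"
proof -
  have "bdd_below (insert 1 ((\<lambda>i. c i + dist q (a i)) ` I))"
    using assms by (intro bdd_belowI[where m = 0]) auto
  then show "dist_minorant a c I q \<le> 1" "i \<in> I \<Longrightarrow> dist_minorant a c I q \<le> c i + dist q (a i)"
    unfolding dist_minorant_def by (auto intro: cInf_lower)
qed

lemma dist_minorant_greatest:
  assumes "t \<le> 1" and "\<And>i. i \<in> I \<Longrightarrow> t \<le> c i + dist q (a i)"
  shows "t \<le> dist_minorant a c I q"
  unfolding dist_minorant_def using assms by (intro cInf_greatest) auto

lemma lipschitz_on_dist_minorant:
  assumes "\<forall>i\<in>I. 0 \<le> c i"
  shows "1-lipschitz_on UNIV (dist_minorant a c I)"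
proof (intro lipschitz_onI)
  have lip: "dist_minorant a c I x \<le> dist_minorant a c I y + dist x y" for x y
  proof -
    have "dist_minorant a c I x - dist x y \<le> dist_minorant a c I y"
    proof (rule dist_minorant_greatest)
      show "dist_minorant a c I x - dist x y \<le> 1"
        using dist_minorant_le(1)[OF assms, of a x] zero_le_dist[of x y] by linarith
      show "dist_minorant a c I x - dist x y \<le> c i + dist y (a i)" if "i \<in> I" for i
        using dist_minorant_le(2)[OF assms that, of a x] dist_triangle[of x "a i" y] by linarith
    qed
    then show ?thesis by linarith
  qed
  show "dist (dist_minorant a c I x) (dist_minorant a c I y) \<le> 1 * dist x y" for x y
    using lip[of x y] lip[of y x] by (simp add: dist_real_def dist_commute abs_le_iff)
qed simp

lemma dist_minorant_pos:
  assumes c_pos: "\<forall>i\<in>I. 0 < c i"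
    and c_loc: "\<exists>m>0. \<forall>i\<in>I. dist q (a i) < 1 \<longrightarrow> m \<le> c i"
  shows "0 < dist_minorant a c I q"
proof -
  obtain m where m: "m > 0" "\<forall>i\<in>I. dist q (a i) < 1 \<longrightarrow> m \<le> c i"
    using c_loc by blast
  have "min m 1 \<le> dist_minorant a c I q"
  proof (rule dist_minorant_greatest)
    show "min m 1 \<le> c i + dist q (a i)" if "i \<in> I" for i
    proof -
      have "0 < c i" "dist q (a i) < 1 \<longrightarrow> m \<le> c i" using m c_pos that by auto
      then show ?thesis using zero_le_dist[of q "a i"] by (smt (verit))
    qed
  qed simp
  with m show ?thesis by linarith
qed

lemma dist_minorant_pos_finite:
  assumes "\<forall>i\<in>I. 0 < c i" and "finite {i\<in>I. dist q (a i) < 1}"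
  shows "0 < dist_minorant a c I q"
  using assms
  by (intro dist_minorant_pos exI[of _ "Min (insert 1 (c ` {i\<in>I. dist q (a i) < 1}))"]) auto

lemma lipschitz_minorant:
  fixes g :: "'a::heine_borel \<Rightarrow> real"
  assumes "continuous_on UNIV g" and "\<forall>x. 0 < g x"
  shows "\<exists>h. 1-lipschitz_on UNIV h \<and> (\<forall>q. 0 < h q) \<and> (\<forall>q. h q \<le> g q)"
proof -
  have "\<exists>m>0. \<forall>x. dist q x < 1 \<longrightarrow> m \<le> g x" for q
  proof -
    obtain x0 where "\<forall>x\<in>cball q 1. g x0 \<le> g x"
      using continuous_attains_inf[OF compact_cball, of q 1 g] assms(1)
      by (metis cball_eq_empty continuous_on_subset not_one_less_zero subset_UNIV)
    then show ?thesis using assms(2) by (intro exI[of _ "g x0"]) (auto simp: dist_commute)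
  qed
  then have "0 < dist_minorant (\<lambda>x. x) g UNIV q" for q
    using assms(2) by (intro dist_minorant_pos) auto
  moreover have "dist_minorant (\<lambda>x. x) g UNIV q \<le> g q" for q
    using dist_minorant_le(2)[of UNIV g q "\<lambda>x. x" q] assms(2) by (simp add: less_imp_le)
  moreover have "\<forall>i\<in>UNIV. 0 \<le> g i" using assms(2) by (simp add: less_imp_le)
  ultimately show ?thesis using lipschitz_on_dist_minorant by blast
qed

lemma pos_cont_min:
  assumes "pos_cont a" and "pos_cont b"
  shows "pos_cont (\<lambda>q. min (a q) (b q))"
  using assms unfolding pos_cont_def by (auto intro: continuous_intros)

section \<open>Pseudo-orbits and shadowing\<close>

lemma topologically_anosov_homeomorphism:
  assumes "topologically_anosov f"
  obtains g where "homeomorphism UNIV UNIV f g"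
  using assms unfolding topologically_anosov_def is_homeo_def by blast

lemma topologically_anosov_shadowing:
  assumes "topologically_anosov f" and "pos_cont \<epsilon>"
  obtains \<delta> where "pos_cont \<delta>" "\<And>xs. pseudo_orbit f \<delta> xs \<Longrightarrow> \<exists>x. shadowed f \<epsilon> xs x"
  using assms unfolding topologically_anosov_def by blast

lemma shadowedD:
  assumes "shadowed f \<epsilon> xs x"
  shows "dist (iter f n x) (xs n) < \<epsilon> (xs n)"
  using assms by (simp add: shadowed_def dist_norm norm_minus_commute)

lemma orbit_pseudo_orbit:
  assumes "homeomorphism UNIV UNIV f g" and "\<forall>x. 0 < \<delta> x"
  shows "pseudo_orbit f \<delta> (\<lambda>n. iter f n x)"
  using assms by (simp add: pseudo_orbit_def iter_succ)

lemma pseudo_orbit_splice: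
  assumes "pseudo_orbit f \<delta> xs" and "pseudo_orbit f \<delta> ys"
    and "norm (f (ys (v - 1)) - xs v) < \<delta> (f (ys (v - 1)))"
  shows "pseudo_orbit f \<delta> (\<lambda>n. if v \<le> n then xs n else ys n)"
  unfolding pseudo_orbit_def
proof
  fix n
  consider "v \<le> n" | "n = v - 1" | "n < v - 1" by linarith
  then show "norm (f (if v \<le> n then xs n else ys n) - (if v \<le> n + 1 then xs (n + 1) else ys (n + 1)))
             < \<delta> (f (if v \<le> n then xs n else ys n))"
    by cases (use assms in \<open>auto simp: pseudo_orbit_def\<close>)
qed

definition closed_loop :: "(real^2 \<Rightarrow> real^2) \<Rightarrow> real^2 \<Rightarrow> int \<Rightarrow> int \<Rightarrow> int \<Rightarrow> real^2" where
  "closed_loop f z u v n = iter f (u + (n - u) mod (v - u)) z"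

lemma closed_loop_periodic: "closed_loop f z u v (n + (v - u)) = closed_loop f z u v n"
proof -
  have "n + (v - u) - u = (n - u) + (v - u)" by simp
  then show ?thesis unfolding closed_loop_def by (simp only: mod_add_self2)
qed

lemma closed_loop_last: "u < v \<Longrightarrow> closed_loop f z u v (v - 1) = iter f (v - 1) z"
  by (simp add: closed_loop_def)

lemma closed_loop_pseudo_orbit:
  assumes h: "homeomorphism UNIV UNIV f g" and \<delta>: "\<forall>x. 0 < \<delta> x" and "u < v"
    and jump: "dist (iter f v z) (iter f u z) < \<delta> (iter f v z)"
  shows "pseudo_orbit f \<delta> (closed_loop f z u v)"
  unfolding pseudo_orbit_def closed_loop_def
proof
  fix n
  define P where "P = v - u"
  define m where "m = (n - u) mod P"
  have m: "0 \<le> m" "m < P" using \<open>u < v\<close> by (simp_all add: P_def m_def)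
  have step: "(n + 1 - u) mod P = (m + 1) mod P"
    unfolding m_def by (metis add.commute add_diff_eq mod_add_right_eq)
  show "norm (f (iter f (u + (n - u) mod (v - u)) z) - iter f (u + (n + 1 - u) mod (v - u)) z)
        < \<delta> (f (iter f (u + (n - u) mod (v - u)) z))"
  proof (cases "m + 1 < P")
    case True
    have "iter f (u + (m + 1)) z = f (iter f (u + m) z)"
      using iter_succ[OF h, of "u + m"] by (simp add: add.assoc)
    then show ?thesis
      using True m step \<delta> by (simp add: P_def[symmetric] m_def[symmetric])
  next
    case False
    then have "m + 1 = P" using m by linarith
    then have "f (iter f (u + m) z) = iter f v z"
      using iter_succ[OF h, of "u + m"] by (simp add: P_def add.assoc)
    moreover have "(n + 1 - u) mod P = 0" using step \<open>m + 1 = P\<close> by simp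
    ultimately show ?thesis
      using jump by (simp add: P_def[symmetric] m_def[symmetric] dist_norm)
  qed
qed

text \<open>Shadowing is non-strict here so that it survives passing to limits of orbit points.\<close>

definition unique_shadowing :: "(real^2 \<Rightarrow> real^2) \<Rightarrow> (real^2 \<Rightarrow> real) \<Rightarrow> bool" where
  "unique_shadowing f e \<longleftrightarrow>
     (\<forall>xs x y. (\<forall>n. dist (iter f n x) (xs n) \<le> e (xs n) \<and> dist (iter f n y) (xs n) \<le> e (xs n))
               \<longrightarrow> x = y)"

lemma unique_shadowingD:
  assumes "unique_shadowing f e"
    and "\<And>n. dist (iter f n x) (xs n) \<le> e (xs n)" and "\<And>n. dist (iter f n y) (xs n) \<le> e (xs n)"
  shows "x = y"
  using assms unfolding unique_shadowing_def by blast

lemma unique_shadowing_mono: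
  assumes "unique_shadowing f e" and "\<And>q. \<epsilon> q \<le> e q"
  shows "unique_shadowing f \<epsilon>"
  using assms unfolding unique_shadowing_def by (meson order.trans)

lemma topologically_anosov_unique_shadowing:
  assumes "topologically_anosov f"
  shows "\<exists>e. pos_cont e \<and> unique_shadowing f e"
proof -
  obtain \<epsilon>0 where "pos_cont \<epsilon>0"
    and expansive: "\<And>x y. x \<noteq> y \<Longrightarrow> \<exists>k. norm (iter f k x - iter f k y) > \<epsilon>0 (iter f k x)"
    using assms unfolding topologically_anosov_def by blast
  then obtain h where h: "1-lipschitz_on UNIV h" "\<forall>q. 0 < h q" "\<forall>q. h q \<le> \<epsilon>0 q"
    using lipschitz_minorant[of \<epsilon>0] unfolding pos_cont_def by blast
  define e where "e q = h q / 3" for q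
  have "pos_cont e"
    using lipschitz_on_continuous_on[OF h(1)] h(2) unfolding pos_cont_def e_def
    by (auto intro: continuous_intros)
  moreover have "x = y"
    if close: "\<forall>n. dist (iter f n x) (xs n) \<le> e (xs n) \<and> dist (iter f n y) (xs n) \<le> e (xs n)"
    for xs x y
  proof (rule ccontr)
    assume "x \<noteq> y"
    then obtain k where k: "dist (iter f k x) (iter f k y) > \<epsilon>0 (iter f k x)"
      using expansive by (auto simp: dist_norm)
    have "h (xs k) \<le> h (iter f k x) + dist (iter f k x) (xs k)"
      using lipschitz_onD[OF h(1), of "xs k" "iter f k x"] by (simp add: dist_real_def dist_commute)
    moreover have "3 * dist (iter f k x) (xs k) \<le> h (xs k)" "3 * dist (iter f k y) (xs k) \<le> h (xs k)"
      using close[rule_format, of k] by (auto simp: e_def)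
    moreover have "dist (iter f k x) (iter f k y) \<le> dist (iter f k x) (xs k) + dist (iter f k y) (xs k)"
      by (rule dist_triangle2)
    \<comment> \<open>\<open>h\<close> is 1-Lipschitz, so \<open>\<epsilon>0 \<ge> h \<ge> 2 h(xs k)/3\<close> at \<open>f\<^sup>k x\<close>, which bounds the orbit distance\<close>
    ultimately show False using k h(3) by (smt (verit))
  qed
  ultimately show ?thesis unfolding unique_shadowing_def by blast
qed

lemma periodic_shift:
  fixes ys :: "int \<Rightarrow> 'a"
  assumes "\<And>n. ys (n + P) = ys n"
  shows "ys (m + P * j) = ys m"
proof (induction j rule: int_induct[where k = 0])
  case (step1 i)
  then show ?case using assms[of "m + P * i"] by (simp add: algebra_simps)
next
  case (step2 i)
  then show ?case using assms[of "m + P * (i - 1)"] by (simp add: algebra_simps)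
qed simp

lemma shadow_of_periodic_is_periodic:
  assumes h: "homeomorphism UNIV UNIV f g" and "unique_shadowing f \<epsilon>"
    and per: "\<And>n. ys (n + P) = ys n" and sh: "shadowed f \<epsilon> ys y"
  shows "iter f P y = y"
proof -
  have "dist (iter f n (iter f P y)) (ys n) \<le> \<epsilon> (ys n)" for n
    using shadowedD[OF sh, of "n + P"] by (simp add: per iter_add[OF h])
  moreover have "dist (iter f n y) (ys n) \<le> \<epsilon> (ys n)" for n
    using shadowedD[OF sh, of n] by simp
  ultimately show ?thesis by (rule unique_shadowingD[OF assms(2)])
qed

section \<open>Isolating scales along proper half-orbits\<close>

lemma limit_point_of_infinite_visits:
  fixes d :: "nat \<Rightarrow> int"
  assumes d: "filterlim d F sequentially" and K: "bounded K"
    and inf: "infinite {n. iter f (d n) z \<in> K}"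
  obtains r l where "filterlim r F sequentially" "(\<lambda>k. iter f (r k) z) \<longlonglongrightarrow> l"
proof -
  obtain e :: "nat \<Rightarrow> nat" where e: "strict_mono e" "\<And>n. iter f (d (e n)) z \<in> K"
    using infinite_enumerate[OF inf] by blast
  have "bounded (range (\<lambda>k. iter f (d (e k)) z))"
    using e(2) by (blast intro: bounded_subset[OF K])
  then obtain l t where t: "strict_mono t" "((\<lambda>k. iter f (d (e k)) z) \<circ> t) \<longlonglongrightarrow> l"
    using bounded_imp_convergent_subsequence by blast
  have "filterlim (d \<circ> (e \<circ> t)) F sequentially"
    using filterlim_compose[OF d filterlim_subseq[OF strict_mono_o[OF e(1) t(1)]]] by (simp add: o_def)
  with t(2) show thesis by (intro that[of "d \<circ> (e \<circ> t)" l]) (simp_all add: o_def)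
qed

lemma omega_limit_empty_finite_visits:
  assumes "omega_limit f z = {}" and "bounded K"
  shows "finite {n. 0 \<le> n \<and> iter f n z \<in> K}"
proof -
  have "finite {n. iter f (int n) z \<in> K}"
    using limit_point_of_infinite_visits[OF filterlim_int_sequentially assms(2)] assms(1)
    unfolding omega_limit_def by blast
  moreover have "{n. 0 \<le> n \<and> iter f n z \<in> K} \<subseteq> int ` {n. iter f (int n) z \<in> K}"
    by (auto intro!: image_eqI[of _ int "nat _"])
  ultimately show ?thesis by (meson finite_imageI finite_subset)
qed

lemma alpha_limit_empty_finite_visits:
  assumes "alpha_limit f z = {}" and "bounded K"
  shows "finite {n. n < 0 \<and> iter f n z \<in> K}"
proof -
  have "filterlim (\<lambda>n. - int n) at_bot sequentially"
    unfolding filterlim_at_bot eventually_sequentially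
  proof
    fix Z :: int
    show "\<exists>N. \<forall>n\<ge>N. - int n \<le> Z" by (intro exI[of _ "nat (- Z)"]) auto
  qed
  then have "finite {n. iter f (- int n) z \<in> K}"
    using limit_point_of_infinite_visits[OF _ assms(2)] assms(1)
    unfolding alpha_limit_def by blast
  moreover have "{n. n < 0 \<and> iter f n z \<in> K} \<subseteq> (\<lambda>n. - int n) ` {n. iter f (- int n) z \<in> K}"
    by (auto intro!: image_eqI[of _ "\<lambda>n. - int n" "nat (- _)"])
  ultimately show ?thesis by (meson finite_imageI finite_subset)
qed

lemma separation_on_annulus:
  fixes g :: "'a::heine_borel \<Rightarrow> 'b::metric_space"
  assumes "continuous_on UNIV g" and "inj g" and "0 < r"
  shows "\<exists>c>0. \<forall>w. r \<le> dist w z \<and> dist w z \<le> 1 \<longrightarrow> c \<le> dist (g w) (g z)"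
proof -
  define K where "K = cball z 1 - ball z r"
  have K: "w \<in> K \<longleftrightarrow> r \<le> dist w z \<and> dist w z \<le> 1" for w
    unfolding K_def by (auto simp: dist_commute)
  have "compact K" unfolding K_def by (intro compact_diff compact_cball open_ball)
  show ?thesis
  proof (cases "K = {}")
    case True
    then show ?thesis using K by (intro exI[of _ 1]) auto
  next
    case False
    have "continuous_on K (\<lambda>w. dist (g w) (g z))"
      using assms(1) by (intro continuous_intros) (auto intro: continuous_on_subset)
    then obtain x0 where x0: "x0 \<in> K" "\<forall>w\<in>K. dist (g x0) (g z) \<le> dist (g w) (g z)"
      using continuous_attains_inf[OF \<open>compact K\<close> False] by blast
    have "x0 \<noteq> z" using x0(1) K assms(3) by force
    then have "0 < dist (g x0) (g z)" using assms(2) by (simp add: inj_eq)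
    with x0(2) K show ?thesis by blast
  qed
qed

lemma separation_rigidity:
  assumes c_sep: "\<And>n w. 1 / (\<bar>real_of_int n\<bar> + 1) \<le> dist w z \<Longrightarrow> dist w z \<le> 1 \<Longrightarrow>
                        c n \<le> dist (iter f n w) (iter f n z)"
    and unbounded: "\<And>N. \<exists>n\<in>T. N \<le> \<bar>n\<bar>"
    and "dist y z \<le> 1" and close: "\<And>n. n \<in> T \<Longrightarrow> dist (iter f n y) (iter f n z) < c n"
  shows "y = z"
proof (rule ccontr)
  assume "y \<noteq> z"
  then have "0 < dist y z" by simp
  obtain n where n: "n \<in> T" "\<lceil>1 / dist y z\<rceil> \<le> \<bar>n\<bar>" using unbounded by blast
  have "1 / dist y z < \<bar>real_of_int n\<bar> + 1" using n(2) by linarith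
  then have "1 / (\<bar>real_of_int n\<bar> + 1) \<le> dist y z"
    using \<open>0 < dist y z\<close> by (simp add: field_simps)
  then have "c n \<le> dist (iter f n y) (iter f n z)" using c_sep \<open>dist y z \<le> 1\<close> by blast
  with close[OF n(1)] show False by linarith
qed

text \<open>The restriction \<open>dist y z \<le> 1\<close> is there for compactness: on a compact annulus
  around \<open>z\<close>, each iterate \<open>f\<^sup>n\<close> moves points away from \<open>f\<^sup>n z\<close> by a positive amount.\<close>

definition isolating_scale :: "(real^2 \<Rightarrow> real^2) \<Rightarrow> int set \<Rightarrow> real^2 \<Rightarrow> (real^2 \<Rightarrow> real) \<Rightarrow> bool" where
  "isolating_scale f T z \<epsilon> \<longleftrightarrow>
     (\<forall>y. dist y z \<le> 1 \<and>
          (\<forall>n\<in>T. dist (iter f n y) (iter f n z) < \<epsilon> (iter f n y) \<or>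
                   dist (iter f n y) (iter f n z) < \<epsilon> (iter f n z))
          \<longrightarrow> y = z)"

lemma isolating_scale_mono:
  assumes "isolating_scale f T z \<epsilon>'" and "\<And>q. \<epsilon> q \<le> \<epsilon>' q"
  shows "isolating_scale f T z \<epsilon>"
  using assms unfolding isolating_scale_def by (meson less_le_trans)

lemma exists_isolating_scale:
  assumes h: "homeomorphism UNIV UNIV f g"
    and unbounded: "\<And>N. \<exists>n\<in>T. N \<le> \<bar>n\<bar>"
    and proper: "\<And>K. bounded K \<Longrightarrow> finite {n\<in>T. iter f n z \<in> K}"
  shows "\<exists>\<epsilon>. pos_cont \<epsilon> \<and> (\<forall>q. \<epsilon> q \<le> 1) \<and> isolating_scale f T z \<epsilon>"
proof -
  \<comment> \<open>\<open>c n\<close> is how far \<open>f\<^sup>n\<close> pushes points at distance \<open>\<ge> 1/(|n|+1)\<close> away from \<open>f\<^sup>n z\<close>;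
    since the orbit visits each ball finitely often, \<open>\<epsilon>\<close> can stay below \<open>c n\<close> near \<open>f\<^sup>n z\<close>\<close>
  define a where "a n = iter f n z" for n
  have "\<exists>c>0. \<forall>w. 1 / (\<bar>real_of_int n\<bar> + 1) \<le> dist w z \<and> dist w z \<le> 1 \<longrightarrow>
                   c \<le> dist (iter f n w) (iter f n z)" for n
    using continuous_on_iter[OF h] iter_inj[OF h]
    by (intro separation_on_annulus) (auto intro: injI)
  then obtain c where c_pos: "\<And>n. 0 < c n"
    and c_sep: "\<And>n w. 1 / (\<bar>real_of_int n\<bar> + 1) \<le> dist w z \<Longrightarrow> dist w z \<le> 1 \<Longrightarrow>
                        c n \<le> dist (iter f n w) (iter f n z)"
    by metis
  define e where "e = dist_minorant a c T"
  have "finite {n\<in>T. dist q (a n) < 1}" for q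
    using proper[of "ball q 1"] by (simp add: a_def dist_commute)
  then have e_pos: "0 < e q" for q
    using c_pos by (simp add: e_def dist_minorant_pos_finite)
  have c_nonneg: "\<forall>n\<in>T. 0 \<le> c n" using c_pos by (simp add: less_imp_le)
  have e_lip: "1-lipschitz_on UNIV e"
    unfolding e_def by (rule lipschitz_on_dist_minorant[OF c_nonneg])
  have e_le: "e q \<le> 1" "n \<in> T \<Longrightarrow> e q \<le> c n + dist q (a n)" for q n
    unfolding e_def by (rule dist_minorant_le[OF c_nonneg])+
  define \<epsilon> where "\<epsilon> q = e q / 2" for q
  have "pos_cont \<epsilon>"
    using lipschitz_on_continuous_on[OF e_lip] e_pos unfolding pos_cont_def \<epsilon>_def
    by (auto intro: continuous_intros)
  moreover have "\<epsilon> q \<le> 1" for q using e_le(1)[of q] by (simp add: \<epsilon>_def)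
  moreover have "y = z"
    if "dist y z \<le> 1"
      and close: "\<forall>n\<in>T. dist (iter f n y) (a n) < \<epsilon> (iter f n y) \<or> dist (iter f n y) (a n) < \<epsilon> (a n)"
    for y
  proof (rule separation_rigidity[OF c_sep unbounded that(1)])
    show "dist (iter f n y) (iter f n z) < c n" if "n \<in> T" for n
      using close e_le(2)[OF that, of "iter f n y"] e_le(2)[OF that, of "a n"] c_pos[of n] that
      unfolding \<epsilon>_def a_def by force
  qed
  ultimately show ?thesis unfolding isolating_scale_def a_def by blast
qed

lemma forward_isolating_scale:
  assumes "homeomorphism UNIV UNIV f g" and "omega_limit f z = {}"
  shows "\<exists>\<epsilon>. pos_cont \<epsilon> \<and> (\<forall>q. \<epsilon> q \<le> 1) \<and> isolating_scale f {n. 0 \<le> n} z \<epsilon>"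
proof (rule exists_isolating_scale[OF assms(1)])
  show "\<exists>n\<in>{n. 0 \<le> n}. N \<le> \<bar>n\<bar>" for N :: int by (intro bexI[of _ "\<bar>N\<bar>"]) auto
qed (use omega_limit_empty_finite_visits[OF assms(2)] in simp)

lemma backward_isolating_scale:
  assumes "homeomorphism UNIV UNIV f g" and "alpha_limit f z = {}"
  shows "\<exists>\<epsilon>. pos_cont \<epsilon> \<and> isolating_scale f {n. n < 0} z \<epsilon>"
proof -
  have "\<exists>\<epsilon>. pos_cont \<epsilon> \<and> (\<forall>q. \<epsilon> q \<le> 1) \<and> isolating_scale f {n. n < 0} z \<epsilon>"
  proof (rule exists_isolating_scale[OF assms(1)])
    show "\<exists>n\<in>{n. n < 0}. N \<le> \<bar>n\<bar>" for N :: int by (intro bexI[of _ "- \<bar>N\<bar> - 1"]) auto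
  qed (use alpha_limit_empty_finite_visits[OF assms(2)] in simp)
  then show ?thesis by blast
qed

lemma shadow_of_forward_orbit:
  assumes "isolating_scale f {n. 0 \<le> n} z \<epsilon>" and "\<forall>q. \<epsilon> q \<le> 1"
    and "shadowed f \<epsilon> xs y" and "\<And>n. 0 \<le> n \<Longrightarrow> xs n = iter f n z"
  shows "y = z"
proof -
  have close: "dist (iter f n y) (iter f n z) < \<epsilon> (iter f n z)" if "0 \<le> n" for n
    using shadowedD[OF assms(3), of n] assms(4)[OF that] by simp
  have "dist y z < \<epsilon> z" using close[of 0] by simp
  then have "dist y z \<le> 1" using assms(2)[rule_format, of z] by linarith
  with close show ?thesis using assms(1) unfolding isolating_scale_def by blast
qed

section \<open>Limit sets\<close>

lemma alpha_limit_iter: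
  assumes h: "homeomorphism UNIV UNIV f g" and x: "x \<in> alpha_limit f z"
  shows "iter f t x \<in> alpha_limit f z"
proof -
  obtain r where r: "filterlim r at_bot sequentially" "(\<lambda>k. iter f (r k) z) \<longlonglongrightarrow> x"
    using x unfolding alpha_limit_def by blast
  have "filterlim (\<lambda>k. r k + t) at_bot sequentially"
    using r(1) unfolding filterlim_at_bot by (metis (mono_tags) eventually_mono le_diff_eq)
  moreover have "(\<lambda>k. iter f (r k + t) z) \<longlonglongrightarrow> iter f t x"
    using iter_tendsto[OF h r(2), of t] by (simp add: iter_add[OF h] add.commute)
  ultimately show ?thesis unfolding alpha_limit_def by blast
qed

lemma alpha_limit_eq_orbit:
  assumes h: "homeomorphism UNIV UNIV f g"
    and "x0 \<in> alpha_limit f z" and "alpha_limit f z \<subseteq> orbit f p"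
  shows "alpha_limit f z = orbit f p"
proof
  obtain s where "x0 = iter f s p" using assms(2,3) unfolding orbit_def by blast
  then have "orbit f p = orbit f x0" using orbit_iter[OF h] by simp
  then show "orbit f p \<subseteq> alpha_limit f z"
    using alpha_limit_iter[OF h assms(2)] unfolding orbit_def by auto
qed (use assms in simp)

lemma alpha_limit_recurrence:
  assumes "x0 \<in> alpha_limit f z" and "pos_cont \<delta>"
  shows "\<exists>u v. u < v \<and> v \<le> 0 \<and> dist (iter f v z) (iter f u z) < \<delta> (iter f v z)"
proof -
  obtain r where r: "filterlim r at_bot sequentially" "(\<lambda>k. iter f (r k) z) \<longlonglongrightarrow> x0"
    using assms(1) unfolding alpha_limit_def by blast
  have "0 < \<delta> x0" "isCont \<delta> x0"
    using assms(2) by (auto simp: pos_cont_def continuous_on_eq_continuous_at)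
  then have "\<forall>\<^sub>F k in sequentially. \<delta> x0 / 2 < \<delta> (iter f (r k) z)"
    using order_tendstoD(1)[OF isCont_tendsto_compose[OF \<open>isCont \<delta> x0\<close> r(2)], of "\<delta> x0 / 2"]
    by simp
  moreover have "\<forall>\<^sub>F k in sequentially. dist (iter f (r k) z) x0 < \<delta> x0 / 4"
    using r(2) \<open>0 < \<delta> x0\<close> by (intro tendstoD) auto
  moreover have "\<forall>\<^sub>F k in sequentially. r k \<le> 0"
    using r(1) unfolding filterlim_at_bot by blast
  ultimately have "\<forall>\<^sub>F k in sequentially. \<delta> x0 / 2 < \<delta> (iter f (r k) z) \<and>
                      dist (iter f (r k) z) x0 < \<delta> x0 / 4 \<and> r k \<le> 0"
    by (intro eventually_conj)
  then obtain N where N: "\<And>k. k \<ge> N \<Longrightarrow> \<delta> x0 / 2 < \<delta> (iter f (r k) z) \<and>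
                                   dist (iter f (r k) z) x0 < \<delta> x0 / 4 \<and> r k \<le> 0"
    unfolding eventually_sequentially by blast
  have "\<forall>\<^sub>F k in sequentially. r k \<le> r N - 1"
    using r(1) unfolding filterlim_at_bot by blast
  then obtain M where M: "\<And>k. k \<ge> M \<Longrightarrow> r k < r N"
    unfolding eventually_sequentially by force
  define u where "u = r (max M N)"
  have "u < r N" "dist (iter f u z) x0 < \<delta> x0 / 4" using M N by (auto simp: u_def)
  moreover have "dist (iter f (r N) z) (iter f u z) \<le> dist (iter f (r N) z) x0 + dist (iter f u z) x0"
    by (rule dist_triangle2)
  ultimately show ?thesis using N[of N] by (intro exI[of _ u] exI[of _ "r N"]) auto
qed

lemma alpha_limit_subset_periodic_orbit:
  assumes h: "homeomorphism UNIV UNIV f g" and us: "unique_shadowing f \<epsilon>"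
    and "0 < P" and per: "\<And>n. ys (n + P) = ys n" and sh: "shadowed f \<epsilon> ys p"
    and backward: "\<And>n. n < v \<Longrightarrow> dist (iter f n z) (ys n) < \<epsilon> (ys n)"
  shows "alpha_limit f z \<subseteq> orbit f p"
proof
  fix x assume "x \<in> alpha_limit f z"
  then obtain r where r: "filterlim r at_bot sequentially" "(\<lambda>k. iter f (r k) z) \<longlonglongrightarrow> x"
    unfolding alpha_limit_def by blast
  have "finite ((\<lambda>k. r k mod P) ` UNIV)"
    by (rule finite_subset[of _ "{0..<P}"]) (use \<open>0 < P\<close> in auto)
  then obtain k0 where "infinite {k. r k mod P = r k0 mod P}"
    using pigeonhole_infinite[of "UNIV :: nat set" "\<lambda>k. r k mod P"] by auto
  from infinite_enumerate[OF this] obtain \<sigma> :: "nat \<Rightarrow> nat"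
    where \<sigma>: "strict_mono \<sigma>" "\<And>k. r (\<sigma> k) mod P = r k0 mod P"
    by auto
  define s where "s = r k0 mod P"
  have "dist (iter f t x) (ys (s + t)) \<le> \<epsilon> (ys (s + t))" for t
  proof (rule LIMSEQ_le_const2)
    show "(\<lambda>k. dist (iter f (r (\<sigma> k) + t) z) (ys (s + t))) \<longlonglongrightarrow> dist (iter f t x) (ys (s + t))"
      using iter_tendsto[OF h LIMSEQ_subseq_LIMSEQ[OF r(2) \<sigma>(1)], of t]
      by (intro tendsto_intros) (simp add: o_def iter_add[OF h] add.commute)
    have "\<forall>\<^sub>F k in sequentially. r (\<sigma> k) \<le> v - t - 1"
      using filterlim_compose[OF r(1) filterlim_subseq[OF \<sigma>(1)]] unfolding filterlim_at_bot by blast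
    then obtain N where N: "\<And>k. k \<ge> N \<Longrightarrow> r (\<sigma> k) + t < v"
      unfolding eventually_sequentially by force
    have "r (\<sigma> k) + t = (s + t) + P * (r (\<sigma> k) div P)" for k
      using \<sigma>(2)[of k] mult_div_mod_eq[of P "r (\<sigma> k)"] unfolding s_def by linarith
    then have "ys (r (\<sigma> k) + t) = ys (s + t)" for k
      using periodic_shift[of ys P, OF per] by metis
    then show "\<exists>N. \<forall>k\<ge>N. dist (iter f (r (\<sigma> k) + t) z) (ys (s + t)) \<le> \<epsilon> (ys (s + t))"
      using N backward by (metis less_imp_le)
  qed
  moreover have "dist (iter f t (iter f s p)) (ys (s + t)) \<le> \<epsilon> (ys (s + t))" for t
    using shadowedD[OF sh, of "s + t"] by (simp add: iter_add[OF h, symmetric] add.commute)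
  ultimately have "x = iter f s p"
    by (rule unique_shadowingD[OF us, where xs = "\<lambda>t. ys (s + t)"])
  then show "x \<in> orbit f p" unfolding orbit_def by blast
qed

lemma exists_nearby_point:
  fixes z :: "real^2"
  assumes "pos_cont \<delta>"
  shows "\<exists>w. w \<noteq> z \<and> dist w z \<le> 1 \<and> dist w z < \<delta> w"
proof -
  have "0 < \<delta> z" "isCont \<delta> z"
    using assms by (auto simp: pos_cont_def continuous_on_eq_continuous_at)
  then obtain \<rho> where "0 < \<rho>" and \<rho>: "\<And>w. dist w z < \<rho> \<Longrightarrow> \<bar>\<delta> w - \<delta> z\<bar> < \<delta> z / 2"
    unfolding continuous_at_eps_delta dist_real_def by (elim allE[of _ "\<delta> z / 2"]) auto
  then have \<rho>': "\<delta> z / 2 < \<delta> w" if "dist w z < \<rho>" for w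
    using \<rho>[OF that] by arith
  define d where "d = min (min \<rho> (\<delta> z / 2)) 1 / 2"
  have "0 < d" using \<open>0 < \<rho>\<close> \<open>0 < \<delta> z\<close> by (simp add: d_def)
  then obtain e :: "real^2" where e: "norm e = d" using vector_choose_size by (metis less_imp_le)
  have "dist (z + e) z = d" using e by (simp add: dist_norm)
  moreover have "d < \<rho>" "d < \<delta> z / 2" "d \<le> 1" using \<open>0 < \<rho>\<close> \<open>0 < \<delta> z\<close> by (auto simp: d_def)
  ultimately show ?thesis using \<open>0 < d\<close> \<rho>'[of "z + e"] by (intro exI[of _ "z + e"]) auto
qed

lemma omega_alpha_limit_not_both_empty:
  assumes TA: "topologically_anosov f"
    and "omega_limit f z = {}" and "alpha_limit f z = {}"
  shows False
proof -
  obtain g where h: "homeomorphism UNIV UNIV f g"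
    using TA by (rule topologically_anosov_homeomorphism)
  obtain \<epsilon>1 \<epsilon>2 where \<epsilon>1: "pos_cont \<epsilon>1" "\<forall>q. \<epsilon>1 q \<le> 1" "isolating_scale f {n. 0 \<le> n} z \<epsilon>1"
    and \<epsilon>2: "pos_cont \<epsilon>2" "isolating_scale f {n. n < 0} z \<epsilon>2"
    using forward_isolating_scale[OF h assms(2)] backward_isolating_scale[OF h assms(3)] by blast
  define \<epsilon> where "\<epsilon> q = min (\<epsilon>1 q) (\<epsilon>2 q)" for q
  obtain \<delta> where \<delta>: "pos_cont \<delta>" "\<And>xs. pseudo_orbit f \<delta> xs \<Longrightarrow> \<exists>x. shadowed f \<epsilon> xs x"
    using topologically_anosov_shadowing[OF TA pos_cont_min[OF \<epsilon>1(1) \<epsilon>2(1)]] unfolding \<epsilon>_def by blast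
  have \<delta>_pos: "\<forall>x. 0 < \<delta> x" using \<delta>(1) by (simp add: pos_cont_def)
  obtain w where w: "w \<noteq> z" "dist w z \<le> 1" "dist w z < \<delta> w"
    using exists_nearby_point[OF \<delta>(1)] by blast
  define xs where "xs n = (if 0 \<le> n then iter f n z else iter f n w)" for n
  have "f (iter f (0 - 1) w) = w" using iter_succ[OF h, of "-1" w] by simp
  then have "pseudo_orbit f \<delta> xs"
    unfolding xs_def using w(3) orbit_pseudo_orbit[OF h \<delta>_pos]
    by (intro pseudo_orbit_splice) (auto simp: dist_norm)
  then obtain y where y: "shadowed f \<epsilon> xs y" using \<delta>(2) by blast
  have "isolating_scale f {n. 0 \<le> n} z \<epsilon>"
    by (rule isolating_scale_mono[OF \<epsilon>1(3)]) (simp add: \<epsilon>_def)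
  moreover have "\<forall>q. \<epsilon> q \<le> 1" using \<epsilon>1(2) by (simp add: \<epsilon>_def min.coboundedI1)
  ultimately have "y = z"
    using y by (rule shadow_of_forward_orbit) (simp add: xs_def)
  then have "dist (iter f n w) (iter f n z) < \<epsilon>2 (iter f n w)" if "n < 0" for n
    using shadowedD[OF y, of n] that by (simp add: xs_def \<epsilon>_def dist_commute)
  then have "w = z" using \<epsilon>2(2) w(2) unfolding isolating_scale_def by blast
  with w(1) show False by blast
qed

lemma backward_orbit_near_closed_loop:
  assumes h: "homeomorphism UNIV UNIV f g"
    and iso: "isolating_scale f {n. 0 \<le> n} z \<epsilon>" "\<forall>q. \<epsilon> q \<le> 1"
    and \<delta>_pos: "\<forall>x. 0 < \<delta> x" and \<delta>: "\<And>xs. pseudo_orbit f \<delta> xs \<Longrightarrow> \<exists>x. shadowed f \<epsilon> xs x"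
    and uv: "u < v" "v \<le> 0" "dist (iter f v z) (iter f u z) < \<delta> (iter f v z)"
    and "n < v"
  shows "dist (iter f n z) (closed_loop f z u v n) < \<epsilon> (closed_loop f z u v n)"
proof -
  define xs where "xs n = (if v \<le> n then iter f n z else closed_loop f z u v n)" for n
  have "pseudo_orbit f \<delta> xs"
    unfolding xs_def using closed_loop_pseudo_orbit[OF h \<delta>_pos uv(1,3)] orbit_pseudo_orbit[OF h \<delta>_pos]
      closed_loop_last[OF uv(1)] \<delta>_pos
    by (intro pseudo_orbit_splice) (auto simp: iter_succ[OF h, symmetric])
  then obtain y where y: "shadowed f \<epsilon> xs y" using \<delta> by blast
  have "y = z" using iso y by (rule shadow_of_forward_orbit) (use uv(2) in \<open>simp add: xs_def\<close>)
  then show ?thesis using shadowedD[OF y, of n] \<open>n < v\<close> by (simp add: xs_def)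
qed

lemma alpha_limit_periodic_orbit:
  assumes TA: "topologically_anosov f"
    and "omega_limit f z = {}" and x0: "x0 \<in> alpha_limit f z"
  shows "\<exists>p. periodic_point f p \<and> alpha_limit f z = orbit f p"
proof -
  obtain g where h: "homeomorphism UNIV UNIV f g"
    using TA by (rule topologically_anosov_homeomorphism)
  obtain \<epsilon>1 e where \<epsilon>1: "pos_cont \<epsilon>1" "\<forall>q. \<epsilon>1 q \<le> 1" "isolating_scale f {n. 0 \<le> n} z \<epsilon>1"
    and e: "pos_cont e" "unique_shadowing f e"
    using forward_isolating_scale[OF h assms(2)] topologically_anosov_unique_shadowing[OF TA] by blast
  define \<epsilon> where "\<epsilon> q = min (e q) (\<epsilon>1 q)" for q
  have iso: "isolating_scale f {n. 0 \<le> n} z \<epsilon>" "\<forall>q. \<epsilon> q \<le> 1"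
    using isolating_scale_mono[OF \<epsilon>1(3)] \<epsilon>1(2) by (auto simp: \<epsilon>_def min.coboundedI2)
  have us: "unique_shadowing f \<epsilon>" by (rule unique_shadowing_mono[OF e(2)]) (simp add: \<epsilon>_def)
  obtain \<delta> where \<delta>: "pos_cont \<delta>" "\<And>xs. pseudo_orbit f \<delta> xs \<Longrightarrow> \<exists>x. shadowed f \<epsilon> xs x"
    using topologically_anosov_shadowing[OF TA pos_cont_min[OF e(1) \<epsilon>1(1)]] unfolding \<epsilon>_def by blast
  have \<delta>_pos: "\<forall>x. 0 < \<delta> x" using \<delta>(1) by (simp add: pos_cont_def)
  obtain u v where uv: "u < v" "v \<le> 0" "dist (iter f v z) (iter f u z) < \<delta> (iter f v z)"
    using alpha_limit_recurrence[OF x0 \<delta>(1)] by blast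
  obtain p where p: "shadowed f \<epsilon> (closed_loop f z u v) p"
    using \<delta>(2) closed_loop_pseudo_orbit[OF h \<delta>_pos uv(1,3)] by blast
  have "alpha_limit f z \<subseteq> orbit f p"
    using alpha_limit_subset_periodic_orbit[OF h us _ closed_loop_periodic p
        backward_orbit_near_closed_loop[OF h iso \<delta>_pos \<delta>(2) uv]] uv(1)
    by simp
  then have "alpha_limit f z = orbit f p" by (rule alpha_limit_eq_orbit[OF h x0])
  moreover have "periodic_point f p"
    using shadow_of_periodic_is_periodic[OF h us closed_loop_periodic p] uv(1)
    by (intro periodic_pointI) auto
  ultimately show ?thesis by blast
qed

theorem mainTheorem5:
  fixes f :: "real^2 \<Rightarrow> real^2" and z :: "real^2"
  assumes "topologically_anosov f"
    and "omega_limit f z = {}"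
  shows "\<not> bounded (alpha_limit f z) \<or>
         (\<exists>p. periodic_point f p \<and> alpha_limit f z = orbit f p)"
proof -
  obtain x0 where "x0 \<in> alpha_limit f z"
    using omega_alpha_limit_not_both_empty[OF assms] by blast
  then show ?thesis using alpha_limit_periodic_orbit[OF assms] by blast
qed

end
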